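(* Let $f\in A[X]$ be monic with discriminant $\Delta=\mathrm{Res}_X(f,f')\neq 0$, $r=v(\Delta)$, and let $N>2r$ be an integer. Then the number of roots in $A/\pi^NA$ of the reduction $f_N$ of $f$ modulo $\pi^N$ is at most $q^r$ times the number of roots of $f$ in $K$.
   Context: $K$ is a field complete with respect to a non-archimedean discrete valuation $v$, normalized by $v(\pi)=1$ for a uniformizer $\pi$ of the valuation ring $A=\{x\in K: v(x)\geq 0\}$; the residue field $A/\pi A$ is finite with $q$ elements. *)

theory Defs
  imports "HOL-Computational_Algebra.Polynomial" "Subresultants.Resultant_Prelim"
begin

text \<open>A field K with a normalized discrete valuation v (values on nonzero elements;
  the value at 0 is irrelevant and stands for +infinity), uniformizer pi.\<close>

definition discrete_valuation :: "('a::field \<Rightarrow> int) \<Rightarrow> bool" where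
  "discrete_valuation v \<longleftrightarrow>
     (\<forall>x y. x \<noteq> 0 \<longrightarrow> y \<noteq> 0 \<longrightarrow> v (x * y) = v x + v y) \<and>
     (\<forall>x y. x \<noteq> 0 \<longrightarrow> y \<noteq> 0 \<longrightarrow> x + y \<noteq> 0 \<longrightarrow> v (x + y) \<ge> min (v x) (v y)) \<and>
     v ` (UNIV - {0}) = UNIV"

definition valring :: "('a::field \<Rightarrow> int) \<Rightarrow> 'a set" where
  "valring v = {x. x = 0 \<or> v x \<ge> 0}"

definition val_complete :: "('a::field \<Rightarrow> int) \<Rightarrow> bool" where
  "val_complete v \<longleftrightarrow>
     (\<forall>X :: nat \<Rightarrow> 'a.
        (\<forall>M. \<exists>n0. \<forall>m\<ge>n0. \<forall>n\<ge>n0. X m - X n = 0 \<or> v (X m - X n) \<ge> M) \<longrightarrow>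
        (\<exists>L. \<forall>M. \<exists>n0. \<forall>n\<ge>n0. X n - L = 0 \<or> v (X n - L) \<ge> M))"

definition cong_rel :: "('a::field \<Rightarrow> int) \<Rightarrow> 'a \<Rightarrow> nat \<Rightarrow> ('a \<times> 'a) set" where
  "cong_rel v \<pi> N = {(x, y). x \<in> valring v \<and> y \<in> valring v \<and>
                        x - y \<in> (\<lambda>a. \<pi> ^ N * a) ` valring v}"

definition quot :: "('a::field \<Rightarrow> int) \<Rightarrow> 'a \<Rightarrow> nat \<Rightarrow> 'a set set" where
  "quot v \<pi> N = valring v // cong_rel v \<pi> N"

definition roots_mod :: "('a::field \<Rightarrow> int) \<Rightarrow> 'a \<Rightarrow> nat \<Rightarrow> 'a poly \<Rightarrow> 'a set set" where
  "roots_mod v \<pi> N f = {C \<in> quot v \<pi> N. \<exists>x\<in>C. poly f x \<in> (\<lambda>a. \<pi> ^ N * a) ` valring v}"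

end

theory Submission
  imports Defs
begin

text \<open>Let \<open>r = v(\<Delta>)\<close>. For every \<open>x \<in> A\<close> the Sylvester matrix exhibits \<open>\<Delta>\<close> as an \<open>A\<close>-linear
  combination of \<open>f(x)\<close> and \<open>f'(x)\<close>. Hence a root \<open>x\<close> of \<open>f\<close> modulo \<open>\<pi>\<^sup>N\<close>, \<open>N > 2r\<close>, has
  \<open>v(f'(x)) \<le> r\<close>, so \<open>v(f(x)) > 2 v(f'(x))\<close> and Newton's iteration from \<open>x\<close> converges to a root
  \<open>\<alpha> \<in> A\<close> of \<open>f\<close> with \<open>v(x - \<alpha>) \<ge> N - r\<close> (Hensel's lemma). So every root class modulo \<open>\<pi>\<^sup>N\<close>
  meets the disc \<open>{y. v(y - \<alpha>) \<ge> N - r}\<close> around some root \<open>\<alpha>\<close> of \<open>f\<close>, and such a disc meets at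
  most \<open>q\<^sup>r\<close> classes modulo \<open>\<pi>\<^sup>N\<close>: modulo \<open>\<pi>\<^sup>N\<close> its points are \<open>\<alpha> + \<pi>^(N - r) \<cdot> t\<close> with
  \<open>t = t\<^sub>0 + t\<^sub>1\<pi> + \<dots> + t\<^sub>r\<^sub>-\<^sub>1\<pi>^(r - 1)\<close>, the digits \<open>t\<^sub>i\<close> ranging over representatives of \<open>A/\<pi>A\<close>.\<close>

section \<open>Valuation bounds\<close>

text \<open>\<open>val_ge v n x\<close> means \<open>x \<in> \<pi>\<^sup>n A\<close>; the value \<open>v 0\<close> is meaningless, so \<open>0\<close> is treated apart.\<close>
definition val_ge :: "('a::field \<Rightarrow> int) \<Rightarrow> int \<Rightarrow> 'a \<Rightarrow> bool" where
  "val_ge v n x \<longleftrightarrow> x = 0 \<or> n \<le> v x"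

locale valued_field =
  fixes v :: "'a::field \<Rightarrow> int"
  assumes discrete_valuation: "discrete_valuation v"
begin

lemma val_mult: "x \<noteq> 0 \<Longrightarrow> y \<noteq> 0 \<Longrightarrow> v (x * y) = v x + v y"
  using discrete_valuation unfolding discrete_valuation_def by blast

lemma val_add: "x \<noteq> 0 \<Longrightarrow> y \<noteq> 0 \<Longrightarrow> x + y \<noteq> 0 \<Longrightarrow> min (v x) (v y) \<le> v (x + y)"
  using discrete_valuation unfolding discrete_valuation_def by blast

lemma val_one [simp]: "v 1 = 0"
  using val_mult[of 1 1] by simp

lemma val_minus: "v (- x) = v x"
proof (cases "x = 0")
  case False
  have "v (-1) = 0" using val_mult[of "-1" "-1"] by simp
  then show ?thesis using val_mult[of "-1" x] False by simp
qed simp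

lemma val_divide: "x \<noteq> 0 \<Longrightarrow> y \<noteq> 0 \<Longrightarrow> v (x / y) = v x - v y"
  using val_mult[of "x / y" y] by simp

lemma val_power: "x \<noteq> 0 \<Longrightarrow> v (x ^ n) = int n * v x"
  by (induction n) (auto simp: val_mult algebra_simps)

lemma val_ge_0 [simp]: "val_ge v n 0"
  by (simp add: val_ge_def)

lemma val_ge_one [simp]: "val_ge v 0 1"
  by (simp add: val_ge_def)

lemma val_ge_mono: "val_ge v n x \<Longrightarrow> m \<le> n \<Longrightarrow> val_ge v m x"
  unfolding val_ge_def by auto

lemma val_ge_add: "val_ge v n x \<Longrightarrow> val_ge v n y \<Longrightarrow> val_ge v n (x + y)"
  unfolding val_ge_def using val_add[of x y] by fastforce

lemma val_ge_minus_iff [simp]: "val_ge v n (- x) \<longleftrightarrow> val_ge v n x"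
  by (simp add: val_ge_def val_minus)

lemma val_ge_diff: "val_ge v n x \<Longrightarrow> val_ge v n y \<Longrightarrow> val_ge v n (x - y)"
  using val_ge_add[of n x "- y"] by simp

lemma val_ge_diff_commute: "val_ge v n (x - y) \<longleftrightarrow> val_ge v n (y - x)"
  using val_ge_minus_iff[of n "x - y"] by simp

lemma val_ge_mult: "val_ge v m x \<Longrightarrow> val_ge v n y \<Longrightarrow> val_ge v (m + n) (x * y)"
  unfolding val_ge_def by (cases "x = 0"; cases "y = 0") (auto simp: val_mult)

lemma val_ge_mult_integral: "val_ge v 0 x \<Longrightarrow> val_ge v n y \<Longrightarrow> val_ge v n (x * y)"
  using val_ge_mult[of 0 x n y] by simp

lemma val_ge_of_nat: "val_ge v 0 (of_nat n)"
  by (induction n) (auto intro: val_ge_add)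

lemma val_ge_power: "val_ge v 0 x \<Longrightarrow> val_ge v 0 (x ^ n)"
  by (induction n) (auto intro: val_ge_mult_integral)

lemma val_ge_sum: "(\<And>i. i \<in> S \<Longrightarrow> val_ge v n (f i)) \<Longrightarrow> val_ge v n (sum f S)"
  by (induction S rule: infinite_finite_induct) (auto intro: val_ge_add)

lemma val_ge_prod: "(\<And>i. i \<in> S \<Longrightarrow> val_ge v 0 (f i)) \<Longrightarrow> val_ge v 0 (prod f S)"
  by (induction S rule: infinite_finite_induct) (auto intro: val_ge_mult_integral)

lemma val_ge_all_imp_zero:
  assumes "\<And>n::nat. val_ge v (c + int n) x"
  shows "x = 0"
  using assms[of "nat (v x - c + 1)"] by (auto simp: val_ge_def split: if_splits)

lemma val_eq_of_val_ge_diff: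
  assumes "val_ge v (v b + 1) (a - b)" and "b \<noteq> 0"
  shows "a \<noteq> 0 \<and> v a = v b"
proof -
  have "a \<noteq> 0" using assms by (auto simp: val_ge_def val_minus)
  have "v a \<ge> v b"
    using assms val_add[of b "a - b"] \<open>a \<noteq> 0\<close> by (cases "a = b") (auto simp: val_ge_def)
  moreover have "v b \<ge> v a"
    using assms val_add[of a "b - a"] \<open>a \<noteq> 0\<close> val_minus[of "a - b"]
    by (cases "a = b") (auto simp: val_ge_def)
  ultimately show ?thesis using \<open>a \<noteq> 0\<close> by simp
qed

lemma valring_iff_val_ge: "x \<in> valring v \<longleftrightarrow> val_ge v 0 x"
  by (simp add: valring_def val_ge_def)

section \<open>Integral polynomials and Hensel's lemma\<close>

definition integral_poly :: "'a poly \<Rightarrow> bool" where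
  "integral_poly f \<longleftrightarrow> (\<forall>i. val_ge v 0 (coeff f i))"

lemma integral_poly_pCons: "integral_poly (pCons a p) \<longleftrightarrow> val_ge v 0 a \<and> integral_poly p"
  unfolding integral_poly_def by (auto simp: coeff_pCons split: nat.splits)

lemma integral_poly_pderiv: "integral_poly f \<Longrightarrow> integral_poly (pderiv f)"
  unfolding integral_poly_def
  by (auto simp: coeff_pderiv intro!: val_ge_mult_integral val_ge_add val_ge_of_nat)

lemma val_ge_poly: "integral_poly f \<Longrightarrow> val_ge v 0 x \<Longrightarrow> val_ge v 0 (poly f x)"
  by (induction f rule: pCons_induct)
    (auto simp: integral_poly_pCons intro!: val_ge_add val_ge_mult_integral)

lemma poly_taylor_integral_remainder:
  assumes "integral_poly f" "val_ge v 0 x" "val_ge v 0 h"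
  shows "\<exists>c. val_ge v 0 c \<and> poly f (x + h) = poly f x + poly (pderiv f) x * h + h\<^sup>2 * c"
  using assms(1)
proof (induction f rule: pCons_induct)
  case 0
  show ?case by (intro exI[of _ 0]) simp
next
  case (pCons a g)
  then have g: "integral_poly g" by (simp add: integral_poly_pCons)
  obtain c where c: "val_ge v 0 c" "poly g (x + h) = poly g x + poly (pderiv g) x * h + h\<^sup>2 * c"
    using pCons.IH[OF g] by blast
  have "val_ge v 0 (poly (pderiv g) x + x * c + h * c)"
    using val_ge_poly[OF integral_poly_pderiv[OF g] assms(2)] c(1) assms(2,3)
    by (auto intro!: val_ge_add val_ge_mult_integral)
  moreover have "poly (pCons a g) (x + h) = poly (pCons a g) x + poly (pderiv (pCons a g)) x * h
      + h\<^sup>2 * (poly (pderiv g) x + x * c + h * c)"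
    using c(2) by (simp add: pderiv_pCons algebra_simps power2_eq_square)
  ultimately show ?case by blast
qed

lemma val_ge_poly_diff:
  assumes "integral_poly f" "val_ge v 0 x" "val_ge v n (y - x)" "n \<ge> 0"
  shows "val_ge v n (poly f y - poly f x)"
proof -
  have h: "val_ge v 0 (y - x)" using assms(3,4) val_ge_mono by blast
  obtain c where c: "val_ge v 0 c"
      "poly f (x + (y - x)) = poly f x + poly (pderiv f) x * (y - x) + (y - x)\<^sup>2 * c"
    using poly_taylor_integral_remainder[OF assms(1,2) h] by blast
  have "poly f y - poly f x = (poly (pderiv f) x + (y - x) * c) * (y - x)"
    using c(2) by (simp add: algebra_simps power2_eq_square)
  moreover have "val_ge v 0 (poly (pderiv f) x + (y - x) * c)"
    using val_ge_poly[OF integral_poly_pderiv[OF assms(1)] assms(2)] h c(1)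
    by (auto intro!: val_ge_add val_ge_mult_integral)
  ultimately show ?thesis using val_ge_mult_integral[OF _ assms(3)] by simp
qed

lemma val_ge_telescope:
  assumes "\<And>k. val_ge v (c + int k) (xs (Suc k) - xs k)" and "n \<le> m"
  shows "val_ge v (c + int n) (xs m - xs n)"
  using assms(2)
proof (induction m rule: dec_induct)
  case (step m)
  have "val_ge v (c + int n) (xs (Suc m) - xs m)"
    using assms(1)[of m] step.hyps(1) val_ge_mono by fastforce
  from val_ge_add[OF this step.IH] show ?case by simp
qed simp

lemma limit_of_val_ge_steps:
  assumes "val_complete v" and steps: "\<And>k. val_ge v (c + int k) (xs (Suc k) - xs k)"
  shows "\<exists>L. \<forall>k. val_ge v (c + int k) (L - xs k)"
proof -
  have "\<exists>L. \<forall>M. \<exists>n0. \<forall>n\<ge>n0. xs n - L = 0 \<or> M \<le> v (xs n - L)"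
  proof (rule assms(1)[unfolded val_complete_def, rule_format])
    fix M
    have "val_ge v M (xs m - xs n)" if "nat (M - c) \<le> m" "nat (M - c) \<le> n" for m n
    proof (cases "n \<le> m")
      case True
      then show ?thesis
        using val_ge_telescope[OF steps True] that(2) val_ge_mono by fastforce
    next
      case False
      then show ?thesis
        using val_ge_telescope[OF steps, of m n] that(1) val_ge_mono val_ge_diff_commute by fastforce
    qed
    then show "\<exists>n0. \<forall>m\<ge>n0. \<forall>n\<ge>n0. xs m - xs n = 0 \<or> M \<le> v (xs m - xs n)"
      unfolding val_ge_def by blast
  qed
  then obtain L where L: "\<And>M. \<exists>n0. \<forall>n\<ge>n0. val_ge v M (xs n - L)"
    unfolding val_ge_def by blast
  have "val_ge v (c + int k) (L - xs k)" for k
  proof -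
    obtain n0 where n0: "\<forall>n\<ge>n0. val_ge v (c + int k) (xs n - L)" using L by blast
    define m where "m = max n0 k"
    have "val_ge v (c + int k) (xs m - xs k)"
      using val_ge_telescope[OF steps, of k m] unfolding m_def by simp
    moreover have "val_ge v (c + int k) (xs m - L)"
      using n0 unfolding m_def by simp
    ultimately show ?thesis
      using val_ge_diff by fastforce
  qed
  then show ?thesis by blast
qed

lemma newton_step:
  assumes f: "integral_poly f" and y: "val_ge v 0 y" and d: "poly (pderiv f) y \<noteq> 0"
    and fy: "val_ge v m (poly f y)" and m: "m > 2 * v (poly (pderiv f) y)"
  defines "h \<equiv> - poly f y / poly (pderiv f) y"
  shows "val_ge v (m - v (poly (pderiv f) y)) h"
    and "val_ge v (2 * (m - v (poly (pderiv f) y))) (poly f (y + h))"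
proof -
  let ?e = "v (poly (pderiv f) y)"
  have e: "?e \<ge> 0"
    using val_ge_poly[OF integral_poly_pderiv[OF f] y] d by (simp add: val_ge_def)
  show h: "val_ge v (m - ?e) h"
  proof (cases "poly f y = 0")
    case False
    then have "v h = v (poly f y) - ?e"
      using d unfolding h_def by (simp add: val_minus val_divide)
    then show ?thesis
      using fy False unfolding val_ge_def by linarith
  qed (simp add: h_def)
  have "val_ge v 0 h"
    by (rule val_ge_mono[OF h]) (use m e in linarith)
  then obtain c where c: "val_ge v 0 c"
      "poly f (y + h) = poly f y + poly (pderiv f) y * h + h\<^sup>2 * c"
    using poly_taylor_integral_remainder[OF f y] by blast
  have "poly f y + poly (pderiv f) y * h = 0"
    using d unfolding h_def by simp
  with c(2) have "poly f (y + h) = c * (h * h)"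
    by (simp add: power2_eq_square)
  moreover have "val_ge v (2 * (m - ?e)) (c * (h * h))"
    using val_ge_mult_integral[OF c(1) val_ge_mult[OF h h]] by (simp only: mult_2)
  ultimately show "val_ge v (2 * (m - ?e)) (poly f (y + h))"
    by simp
qed

lemma newton_iteration:
  assumes f: "integral_poly f" and x: "val_ge v 0 x" and fx: "val_ge v n (poly f x)"
    and d: "poly (pderiv f) x \<noteq> 0" and n: "n > 2 * v (poly (pderiv f) x)"
  defines "xs \<equiv> rec_nat x (\<lambda>_ y. y + - poly f y / poly (pderiv f) y)"
  shows "val_ge v 0 (xs k) \<and> val_ge v (n + int k) (poly f (xs k))
    \<and> val_ge v (n - v (poly (pderiv f) x) + int k) (xs (Suc k) - xs k)"
proof -
  define e where "e = v (poly (pderiv f) x)"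
  have e: "e \<ge> 0"
    using val_ge_poly[OF integral_poly_pderiv[OF f] x] d unfolding e_def val_ge_def by simp
  have xs_Suc: "xs (Suc k) = xs k + - poly f (xs k) / poly (pderiv f) (xs k)" for k
    by (simp add: xs_def)
  \<comment> \<open>\<open>f'(x\<^sub>k)\<close> stays close enough to \<open>f'(x)\<close> to keep the valuation \<open>e\<close>.\<close>
  define Inv where "Inv k \<longleftrightarrow> val_ge v 0 (xs k)
      \<and> val_ge v (e + 1) (poly (pderiv f) (xs k) - poly (pderiv f) x)
      \<and> val_ge v (n + int k) (poly f (xs k))" for k
  have step: "Inv (Suc k) \<and> val_ge v (n - e + int k) (xs (Suc k) - xs k)" if "Inv k" for k
  proof -
    have y: "val_ge v 0 (xs k)" and d': "val_ge v (e + 1) (poly (pderiv f) (xs k) - poly (pderiv f) x)"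
      and fy: "val_ge v (n + int k) (poly f (xs k))"
      using that unfolding Inv_def by auto
    have dy: "poly (pderiv f) (xs k) \<noteq> 0" "v (poly (pderiv f) (xs k)) = e"
      using val_eq_of_val_ge_diff[OF d'[unfolded e_def] d] unfolding e_def by auto
    have m: "n + int k > 2 * v (poly (pderiv f) (xs k))"
      using n dy(2) unfolding e_def by simp
    have h: "val_ge v (n - e + int k) (xs (Suc k) - xs k)"
      using newton_step(1)[OF f y dy(1) fy m] dy(2) by (simp add: xs_Suc algebra_simps)
    have "val_ge v (2 * (n + int k - e)) (poly f (xs (Suc k)))"
      using newton_step(2)[OF f y dy(1) fy m] dy(2) by (simp add: xs_Suc)
    then have "val_ge v (n + int (Suc k)) (poly f (xs (Suc k)))"
      by (rule val_ge_mono) (use n e in \<open>simp add: e_def\<close>)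
    moreover have "val_ge v 0 (xs (Suc k))"
      using val_ge_add[OF y val_ge_mono[OF h]] n e unfolding e_def by simp
    moreover have "val_ge v (e + 1) (poly (pderiv f) (xs (Suc k)) - poly (pderiv f) (xs k))"
      using val_ge_poly_diff[OF integral_poly_pderiv[OF f] y val_ge_mono[OF h]] n e
      unfolding e_def by simp
    then have "val_ge v (e + 1) (poly (pderiv f) (xs (Suc k)) - poly (pderiv f) x)"
      using val_ge_add[OF _ d'] by fastforce
    ultimately show ?thesis
      using h unfolding Inv_def by blast
  qed
  have "Inv k"
    by (induction k) (use x fx step in \<open>auto simp: Inv_def xs_def\<close>)
  then show ?thesis
    using step unfolding Inv_def e_def by blast
qed

lemma hensel_lifting:
  assumes complete: "val_complete v" and f: "integral_poly f" and x: "val_ge v 0 x"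
    and fx: "val_ge v n (poly f x)" and d: "poly (pderiv f) x \<noteq> 0"
    and n: "n > 2 * v (poly (pderiv f) x)"
  shows "\<exists>\<alpha>. val_ge v 0 \<alpha> \<and> poly f \<alpha> = 0 \<and> val_ge v (n - v (poly (pderiv f) x)) (\<alpha> - x)"
proof -
  define e where "e = v (poly (pderiv f) x)"
  have e: "e \<ge> 0"
    using val_ge_poly[OF integral_poly_pderiv[OF f] x] d unfolding e_def val_ge_def by simp
  define xs where "xs = rec_nat x (\<lambda>_ y. y + - poly f y / poly (pderiv f) y)"
  note iter = newton_iteration[OF f x fx d n, folded xs_def e_def]
  obtain L where L: "\<And>k. val_ge v (n - e + int k) (L - xs k)"
    using limit_of_val_ge_steps[OF complete, of "n - e" xs] iter by blast
  have "poly f L = 0"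
  proof (rule val_ge_all_imp_zero)
    fix k
    have "val_ge v (n - e + int k) (poly f L - poly f (xs k))"
      using val_ge_poly_diff[OF f _ L] iter n e unfolding e_def by simp
    moreover have "val_ge v (n - e + int k) (poly f (xs k))"
      using iter[of k] e by (auto elim: val_ge_mono)
    ultimately show "val_ge v (n - e + int k) (poly f L)"
      using val_ge_add by fastforce
  qed
  moreover have "val_ge v (n - e) (L - x)"
    using L[of 0] by (simp add: xs_def)
  moreover have "val_ge v 0 L"
    using val_ge_add[OF x val_ge_mono[OF calculation(2)]] n e unfolding e_def by simp
  ultimately show ?thesis
    unfolding e_def by blast
qed

end

section \<open>The resultant as a combination of values\<close>

lemma sum_coeff_monom_mult_powers:
  fixes p :: "'a::comm_ring_1 poly"
  assumes "a + degree p < d"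
  shows "(\<Sum>j<d. coeff (monom 1 (Suc a) * p) (d - j) * x ^ (d - 1 - j)) = x ^ a * poly p x"
proof -
  let ?q = "monom 1 a * p"
  have "(\<Sum>j<d. coeff (monom 1 (Suc a) * p) (d - j) * x ^ (d - 1 - j))
      = (\<Sum>j<d. coeff ?q (d - Suc j) * x ^ (d - Suc j))"
  proof (rule sum.cong[OF refl])
    fix j assume "j \<in> {..<d}"
    then have "d - j = Suc (d - Suc j)" by auto
    then show "coeff (monom 1 (Suc a) * p) (d - j) * x ^ (d - 1 - j) = coeff ?q (d - Suc j) * x ^ (d - Suc j)"
      by (simp add: coeff_monom_mult)
  qed
  also have "\<dots> = (\<Sum>t<d. coeff ?q t * x ^ t)"
    using sum.nat_diff_reindex[of "\<lambda>t. coeff ?q t * x ^ t" d] by simp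
  also have "\<dots> = (\<Sum>t\<le>degree ?q. coeff ?q t * x ^ t)"
  proof (rule sum.mono_neutral_right)
    have "degree ?q \<le> a + degree p"
      using degree_mult_le[of "monom 1 a" p] degree_monom_le[of "1::'a" a] by linarith
    then show "{..degree ?q} \<subseteq> {..<d}" using assms by auto
  qed (auto simp: coeff_eq_0)
  also have "\<dots> = x ^ a * poly p x"
    by (simp add: poly_altdef[symmetric] poly_monom)
  finally show ?thesis .
qed

lemma sylvester_mat_mult_powers:
  fixes f g :: "'a::comm_ring_1 poly"
  defines "d \<equiv> degree f + degree g"
  assumes i: "i < d"
  shows "(sylvester_mat f g *\<^sub>v vec d (\<lambda>j. x ^ (d - 1 - j))) $ i =
    (if i < degree g then x ^ (degree g - 1 - i) * poly f x else x ^ (d - 1 - i) * poly g x)"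
proof -
  have "(sylvester_mat f g *\<^sub>v vec d (\<lambda>j. x ^ (d - 1 - j))) $ i
      = (\<Sum>j<d. sylvester_mat f g $$ (i, j) * x ^ (d - 1 - j))"
    using i unfolding d_def by (auto simp: scalar_prod_def atLeast0LessThan intro!: sum.cong)
  also have "\<dots> = (if i < degree g then x ^ (degree g - 1 - i) * poly f x else x ^ (d - 1 - i) * poly g x)"
  proof (cases "i < degree g")
    case True
    have "(\<Sum>j<d. sylvester_mat f g $$ (i, j) * x ^ (d - 1 - j))
        = (\<Sum>j<d. coeff (monom 1 (Suc (degree g - 1 - i)) * f) (d - j) * x ^ (d - 1 - j))"
      using True i sylvester_index_mat2[of i f g] unfolding d_def
      by (intro sum.cong) (auto simp: Suc_diff_Suc)
    also have "\<dots> = x ^ (degree g - 1 - i) * poly f x"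
      using True by (intro sum_coeff_monom_mult_powers) (auto simp: d_def)
    finally show ?thesis using True by simp
  next
    case False
    have "(\<Sum>j<d. sylvester_mat f g $$ (i, j) * x ^ (d - 1 - j))
        = (\<Sum>j<d. coeff (monom 1 (Suc (d - 1 - i)) * g) (d - j) * x ^ (d - 1 - j))"
      using False i sylvester_index_mat2[of i f g] unfolding d_def
      by (intro sum.cong) (auto simp: Suc_diff_Suc)
    also have "\<dots> = x ^ (d - 1 - i) * poly g x"
      using False i by (intro sum_coeff_monom_mult_powers) (auto simp: d_def)
    finally show ?thesis using False by simp
  qed
  finally show ?thesis .
qed

text \<open>By Cramer's rule, replacing the last column of the Sylvester matrix by the column of values
  \<open>x\<^sup>k f(x)\<close>, \<open>x\<^sup>k g(x)\<close> leaves the determinant unchanged; expanding along that column writes the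
  resultant as a combination of \<open>f(x)\<close> and \<open>g(x)\<close> with cofactors as coefficients.\<close>
lemma resultant_eq_cofactor_sum:
  fixes f g :: "'a::comm_ring_1 poly" and x :: 'a
  defines "d \<equiv> degree f + degree g"
  defines "w \<equiv> sylvester_mat f g *\<^sub>v vec d (\<lambda>j. x ^ (d - 1 - j))"
  assumes "d > 0"
  shows "resultant f g = (\<Sum>i<d. w $ i * cofactor (replace_col (sylvester_mat f g) w (d - 1)) i (d - 1))"
proof -
  let ?S = "sylvester_mat f g" and ?M = "replace_col (sylvester_mat f g) w (d - 1)"
  have S: "?S \<in> carrier_mat d d" unfolding d_def by auto
  have last: "d - 1 < d" using assms(3) by simp
  have "det ?M = det ?S"
    using cramer_lemma_mat[OF S _ last, of "vec d (\<lambda>j. x ^ (d - 1 - j))"] last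
    unfolding w_def by simp
  moreover have M: "?M \<in> carrier_mat d d"
    using S unfolding replace_col_def by auto
  moreover have "?M $$ (i, d - 1) = w $ i" if "i < d" for i
    using that S last unfolding replace_col_def by auto
  ultimately show ?thesis
    using laplace_expansion_column[OF M last] unfolding resultant_def by simp
qed

context valued_field
begin

lemma val_ge_det:
  assumes "A \<in> carrier_mat n n" "\<And>i j. i < n \<Longrightarrow> j < n \<Longrightarrow> val_ge v 0 (A $$ (i, j))"
  shows "val_ge v 0 (det A)"
  unfolding det_def'[OF assms(1)]
proof (intro val_ge_sum val_ge_mult_integral)
  fix p assume p: "p \<in> {p. p permutes {0..<n}}"
  show "val_ge v 0 (signof p)"
    by (simp add: sign_def)
  show "val_ge v 0 (\<Prod>i = 0..<n. A $$ (i, p i))"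
    using assms(2) permutes_in_image[of p] p by (auto intro!: val_ge_prod)
qed

lemma val_ge_resultant:
  assumes f: "integral_poly f" and g: "integral_poly g" and x: "val_ge v 0 x"
    and fx: "val_ge v k (poly f x)" and gx: "val_ge v k (poly g x)"
    and deg: "degree f + degree g > 0"
  shows "val_ge v k (resultant f g)"
proof -
  define d where "d = degree f + degree g"
  define w where "w = sylvester_mat f g *\<^sub>v vec d (\<lambda>j. x ^ (d - 1 - j))"
  define M where "M = replace_col (sylvester_mat f g) w (d - 1)"
  have w_k: "val_ge v k (w $ i)" if "i < d" for i
    using sylvester_mat_mult_powers[of i f g x] that fx gx x
    unfolding w_def d_def by (auto intro!: val_ge_mult_integral val_ge_power)
  have w_0: "val_ge v 0 (w $ i)" if "i < d" for i
    using sylvester_mat_mult_powers[of i f g x] that f g x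
    unfolding w_def d_def by (auto intro!: val_ge_mult_integral val_ge_power val_ge_poly)
  have M_0: "val_ge v 0 (M $$ (i, j))" if "i < d" "j < d" for i j
    using that w_0 sylvester_index_mat[of i f g j] f g
    unfolding M_def replace_col_def d_def integral_poly_def by auto
  have M: "M \<in> carrier_mat d d"
    unfolding M_def replace_col_def d_def by auto
  have "val_ge v 0 (cofactor M i (d - 1))" for i
    unfolding cofactor_def
    using mat_delete_carrier[OF M] M_0 M
    by (intro val_ge_mult_integral val_ge_power val_ge_det[of _ "d - 1"])
      (auto simp: mat_delete_def val_ge_minus_iff)
  then show ?thesis
    using resultant_eq_cofactor_sum[of f g x] deg w_k
    unfolding w_def M_def d_def by (auto intro!: val_ge_sum val_ge_mult[of k _ 0, simplified])
qed

lemma val_pderiv_le_val_resultant: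
  assumes f: "integral_poly f" and deg: "degree f > 0" and x: "val_ge v 0 x"
    and \<Delta>: "resultant f (pderiv f) \<noteq> 0" and fx: "val_ge v (v (resultant f (pderiv f)) + 1) (poly f x)"
  shows "poly (pderiv f) x \<noteq> 0 \<and> v (poly (pderiv f) x) \<le> v (resultant f (pderiv f))"
proof (rule ccontr)
  let ?r = "v (resultant f (pderiv f))"
  assume "\<not> ?thesis"
  then have "val_ge v (?r + 1) (poly (pderiv f) x)"
    unfolding val_ge_def by auto
  then have "val_ge v (?r + 1) (resultant f (pderiv f))"
    using val_ge_resultant[OF f integral_poly_pderiv[OF f] x fx] deg by simp
  then show False
    using \<Delta> unfolding val_ge_def by simp
qed

lemma exists_root_near_approximate_root:
  assumes complete: "val_complete v" and f: "integral_poly f" and "monic f"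
    and \<Delta>: "resultant f (pderiv f) \<noteq> 0" and N: "int N > 2 * v (resultant f (pderiv f))"
    and x: "val_ge v 0 x" and fx: "val_ge v (int N) (poly f x)"
  shows "\<exists>\<alpha>. val_ge v 0 \<alpha> \<and> poly f \<alpha> = 0
    \<and> val_ge v (int N - int (nat (v (resultant f (pderiv f))))) (x - \<alpha>)"
proof -
  let ?r = "v (resultant f (pderiv f))"
  have deg: "degree f > 0"
  proof (rule ccontr)
    assume "\<not> degree f > 0"
    then have "f = 1"
      using \<open>monic f\<close> monic_degree_0 by blast
    then show False
      using fx N unfolding val_ge_def by simp
  qed
  have "val_ge v (?r + 1) (poly f x)"
    by (rule val_ge_mono[OF fx]) (use N in linarith)
  then have d: "poly (pderiv f) x \<noteq> 0" "v (poly (pderiv f) x) \<le> ?r"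
    using val_pderiv_le_val_resultant[OF f deg x \<Delta>] by auto
  obtain \<alpha> where \<alpha>: "val_ge v 0 \<alpha>" "poly f \<alpha> = 0" "val_ge v (int N - v (poly (pderiv f) x)) (\<alpha> - x)"
    using hensel_lifting[OF complete f x fx d(1)] d(2) N by auto
  have "val_ge v (int N - int (nat ?r)) (x - \<alpha>)"
    using val_ge_mono[OF \<alpha>(3)] d(2) by (simp add: val_ge_diff_commute)
  then show ?thesis
    using \<alpha>(1,2) by blast
qed

end

section \<open>Residue classes modulo powers of the uniformizer\<close>

locale uniformized_field = valued_field +
  fixes \<pi> :: 'a
  assumes pi_nonzero: "\<pi> \<noteq> 0" and val_pi: "v \<pi> = 1"
begin

lemma val_ge_pi: "val_ge v 0 \<pi>"
  by (simp add: val_ge_def val_pi)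

lemma val_ge_pi_power: "val_ge v (int n) (\<pi> ^ n)"
  using pi_nonzero by (simp add: val_ge_def val_power val_pi)

lemma pi_power_multiples_iff: "x \<in> (\<lambda>a. \<pi> ^ N * a) ` valring v \<longleftrightarrow> val_ge v (int N) x"
proof
  assume "x \<in> (\<lambda>a. \<pi> ^ N * a) ` valring v"
  then obtain a where a: "val_ge v 0 a" "x = \<pi> ^ N * a"
    by (auto simp: valring_iff_val_ge)
  show "val_ge v (int N) x"
    using val_ge_mult[OF val_ge_pi_power a(1)] a(2) by simp
next
  assume x: "val_ge v (int N) x"
  have "val_ge v 0 (x / \<pi> ^ N)"
    using x pi_nonzero by (cases "x = 0") (auto simp: val_ge_def val_divide val_power val_pi)
  moreover have "x = \<pi> ^ N * (x / \<pi> ^ N)"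
    using pi_nonzero by simp
  ultimately show "x \<in> (\<lambda>a. \<pi> ^ N * a) ` valring v"
    by (intro rev_image_eqI[of "x / \<pi> ^ N"]) (simp_all add: valring_iff_val_ge)
qed

lemma cong_rel_iff:
  "(x, y) \<in> cong_rel v \<pi> N \<longleftrightarrow> val_ge v 0 x \<and> val_ge v 0 y \<and> val_ge v (int N) (x - y)"
  by (simp add: cong_rel_def valring_iff_val_ge pi_power_multiples_iff)

lemma equiv_cong_rel: "equiv (valring v) (cong_rel v \<pi> N)"
proof (rule equivI)
  show "refl_on (valring v) (cong_rel v \<pi> N)"
    unfolding refl_on_def by (auto simp: cong_rel_iff valring_iff_val_ge cong_rel_def)
  show "sym (cong_rel v \<pi> N)"
    unfolding sym_def cong_rel_iff by (auto simp: val_ge_diff_commute)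
  show "trans (cong_rel v \<pi> N)"
    unfolding trans_def cong_rel_iff using val_ge_add by fastforce
  show "cong_rel v \<pi> N \<subseteq> valring v \<times> valring v"
    unfolding cong_rel_def by auto
qed

lemma quot_eq_class:
  assumes "C \<in> quot v \<pi> N" "y \<in> C"
  shows "C = cong_rel v \<pi> N `` {y}"
proof -
  obtain z where "C = cong_rel v \<pi> N `` {z}"
    using assms(1) unfolding quot_def by (auto elim: quotientE)
  then show ?thesis
    using assms(2) equiv_class_eq[OF equiv_cong_rel] by auto
qed

lemma val_ge_of_mem_quot:
  assumes "C \<in> quot v \<pi> N" "y \<in> C"
  shows "val_ge v 0 y"
proof -
  have "C \<subseteq> valring v"
    using assms(1) in_quotient_imp_subset[OF equiv_cong_rel] unfolding quot_def by blast
  then show ?thesis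
    using assms(2) valring_iff_val_ge by blast
qed

lemma class_mem_quot: "val_ge v 0 y \<Longrightarrow> cong_rel v \<pi> N `` {y} \<in> quot v \<pi> N"
  unfolding quot_def by (auto simp: valring_iff_val_ge intro: quotientI)

lemma residue_representatives:
  assumes "finite (quot v \<pi> 1)"
  obtains T where "finite T" "card T \<le> card (quot v \<pi> 1)" "\<And>t. t \<in> T \<Longrightarrow> val_ge v 0 t"
    "\<And>y. val_ge v 0 y \<Longrightarrow> \<exists>t\<in>T. val_ge v 1 (y - t)"
proof
  define rep where "rep C = (SOME x. x \<in> C)" for C :: "'a set"
  define T where "T = rep ` quot v \<pi> 1"
  have rep: "rep C \<in> C" if "C \<in> quot v \<pi> 1" for C
    using in_quotient_imp_non_empty[OF equiv_cong_rel] that unfolding quot_def rep_def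
    by (simp add: some_in_eq)
  show "finite T" "card T \<le> card (quot v \<pi> 1)"
    using assms card_image_le unfolding T_def by auto
  show "val_ge v 0 t" if "t \<in> T" for t
    using that rep val_ge_of_mem_quot unfolding T_def by blast
  show "\<exists>t\<in>T. val_ge v 1 (y - t)" if "val_ge v 0 y" for y
  proof
    let ?C = "cong_rel v \<pi> 1 `` {y}"
    show "rep ?C \<in> T"
      using class_mem_quot[OF that] unfolding T_def by blast
    show "val_ge v 1 (y - rep ?C)"
      using rep[OF class_mem_quot[OF that]] by (simp add: cong_rel_iff)
  qed
qed

lemma val_ge_poly_Poly_pi: "(\<And>t. t \<in> set ts \<Longrightarrow> val_ge v 0 t) \<Longrightarrow> val_ge v 0 (poly (Poly ts) \<pi>)"
  by (induction ts) (auto intro!: val_ge_add val_ge_mult_integral val_ge_pi)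

lemma pi_adic_expansion:
  assumes T: "\<And>y. val_ge v 0 y \<Longrightarrow> \<exists>t\<in>T. val_ge v 1 (y - t)" and y: "val_ge v 0 y"
  shows "\<exists>ts. set ts \<subseteq> T \<and> length ts = k \<and> val_ge v (int k) (y - poly (Poly ts) \<pi>)"
  using y
proof (induction k arbitrary: y)
  case 0
  show ?case by (intro exI[of _ "[]"]) (simp add: "0")
next
  case (Suc k)
  obtain t where t: "t \<in> T" "val_ge v 1 (y - t)"
    using T[OF Suc.prems] by blast
  then obtain y' where y': "val_ge v 0 y'" "y - t = \<pi> * y'"
    using pi_power_multiples_iff[of "y - t" 1] by (auto simp: valring_iff_val_ge)
  obtain ts where ts: "set ts \<subseteq> T" "length ts = k" "val_ge v (int k) (y' - poly (Poly ts) \<pi>)"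
    using Suc.IH[OF y'(1)] by blast
  have "y - poly (Poly (t # ts)) \<pi> = \<pi> * (y' - poly (Poly ts) \<pi>)"
    using y'(2) by (simp add: algebra_simps)
  moreover have "val_ge v (1 + int k) (\<pi> * (y' - poly (Poly ts) \<pi>))"
    using val_ge_mult[OF _ ts(3), of 1 \<pi>] pi_nonzero val_pi by (simp add: val_ge_def)
  ultimately show ?case
    using ts t by (intro exI[of _ "t # ts"]) auto
qed

lemma card_classes_near_le:
  assumes fin: "finite (quot v \<pi> 1)" and \<alpha>: "val_ge v 0 \<alpha>" and s: "s \<le> N"
  defines "B \<equiv> {C \<in> quot v \<pi> N. \<exists>y\<in>C. val_ge v (int N - int s) (y - \<alpha>)}"
  shows "finite B" "card B \<le> card (quot v \<pi> 1) ^ s"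
proof -
  obtain T where T: "finite T" "card T \<le> card (quot v \<pi> 1)" "\<And>t. t \<in> T \<Longrightarrow> val_ge v 0 t"
    "\<And>y. val_ge v 0 y \<Longrightarrow> \<exists>t\<in>T. val_ge v 1 (y - t)"
    using residue_representatives[OF fin] by blast
  define L where "L = {ts. set ts \<subseteq> T \<and> length ts = s}"
  define F where "F ts = cong_rel v \<pi> N `` {\<alpha> + \<pi> ^ (N - s) * poly (Poly ts) \<pi>}" for ts
  have B_sub: "B \<subseteq> F ` L"
  proof
    fix C assume "C \<in> B"
    then obtain y where C: "C \<in> quot v \<pi> N" "y \<in> C" "val_ge v (int (N - s)) (y - \<alpha>)"
      using s unfolding B_def by (auto simp: of_nat_diff)
    have "y - \<alpha> \<in> (\<lambda>a. \<pi> ^ (N - s) * a) ` valring v"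
      using C(3) pi_power_multiples_iff by blast
    then obtain z where z: "val_ge v 0 z" "y - \<alpha> = \<pi> ^ (N - s) * z"
      by (auto simp: valring_iff_val_ge)
    obtain ts where ts: "set ts \<subseteq> T" "length ts = s" "val_ge v (int s) (z - poly (Poly ts) \<pi>)"
      using pi_adic_expansion[OF T(4) z(1)] by blast
    let ?w = "\<alpha> + \<pi> ^ (N - s) * poly (Poly ts) \<pi>"
    have "y - ?w = \<pi> ^ (N - s) * (z - poly (Poly ts) \<pi>)"
      using z(2) by (simp add: algebra_simps)
    then have "val_ge v (int N) (y - ?w)"
      using val_ge_mult[OF val_ge_pi_power[of "N - s"] ts(3)] s by (simp add: of_nat_diff)
    moreover have "val_ge v 0 ?w"
      using \<alpha> ts(1) T(3) by (auto intro!: val_ge_add val_ge_mult_integral val_ge_power val_ge_pi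
          val_ge_poly_Poly_pi)
    ultimately have "C = F ts"
      using quot_eq_class[OF C(1,2)] equiv_class_eq[OF equiv_cong_rel] val_ge_of_mem_quot[OF C(1,2)]
      unfolding F_def cong_rel_iff by simp
    then show "C \<in> F ` L"
      using ts unfolding L_def by blast
  qed
  have L: "finite L" "card L \<le> card (quot v \<pi> 1) ^ s"
    unfolding L_def using finite_lists_length_eq[OF T(1)] card_lists_length_eq[OF T(1)] T(2)
    by (auto simp: power_mono)
  show "finite B"
    using B_sub L(1) finite_subset by blast
  have "card B \<le> card (F ` L)"
    using B_sub L(1) by (intro card_mono) auto
  also have "\<dots> \<le> card L"
    using L(1) by (rule card_image_le)
  finally show "card B \<le> card (quot v \<pi> 1) ^ s"
    using L(2) by linarith
qed

lemma roots_mod_subset_classes_near_roots: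
  assumes "val_complete v" "integral_poly f" "monic f" "resultant f (pderiv f) \<noteq> 0"
    and "int N > 2 * v (resultant f (pderiv f))"
  shows "roots_mod v \<pi> N f \<subseteq> (\<Union>\<alpha>\<in>{\<alpha>. val_ge v 0 \<alpha> \<and> poly f \<alpha> = 0}.
    {C \<in> quot v \<pi> N. \<exists>y\<in>C. val_ge v (int N - int (nat (v (resultant f (pderiv f))))) (y - \<alpha>)})"
proof
  fix C assume C: "C \<in> roots_mod v \<pi> N f"
  then obtain x where x: "C \<in> quot v \<pi> N" "x \<in> C" "val_ge v (int N) (poly f x)"
    unfolding roots_mod_def pi_power_multiples_iff by blast
  then show "C \<in> (\<Union>\<alpha>\<in>{\<alpha>. val_ge v 0 \<alpha> \<and> poly f \<alpha> = 0}.
    {C \<in> quot v \<pi> N. \<exists>y\<in>C. val_ge v (int N - int (nat (v (resultant f (pderiv f))))) (y - \<alpha>)})"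
    using exists_root_near_approximate_root[OF assms val_ge_of_mem_quot[OF x(1,2)] x(3)] by blast
qed

end

theorem corollary3p11:
  fixes v :: "'a::field \<Rightarrow> int" and \<pi> :: 'a and q :: nat and f :: "'a poly" and N :: nat
  assumes "discrete_valuation v"
    and "val_complete v"
    and "\<pi> \<noteq> 0" and "v \<pi> = 1"
    and "finite (quot v \<pi> 1)" and "card (quot v \<pi> 1) = q"
    and "\<forall>i. coeff f i \<in> valring v"
    and "monic f"
    and "resultant f (pderiv f) \<noteq> 0"
    and "r = v (resultant f (pderiv f))"
    and "int N > 2 * r"
  shows "card (roots_mod v \<pi> N f) \<le> q ^ nat r * card {x. poly f x = 0}"
proof -
  interpret uniformized_field v \<pi>
    using assms(1,3,4) by unfold_locales
  define R where "R = {\<alpha>. val_ge v 0 \<alpha> \<and> poly f \<alpha> = 0}"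
  define B where "B \<alpha> = {C \<in> quot v \<pi> N. \<exists>y\<in>C. val_ge v (int N - int (nat r)) (y - \<alpha>)}" for \<alpha>
  have f: "integral_poly f"
    using assms(7) unfolding integral_poly_def valring_iff_val_ge by blast
  have "finite {x. poly f x = 0}"
    using assms(8) by (intro poly_roots_finite) auto
  then have R: "finite R" "card R \<le> card {x. poly f x = 0}"
    unfolding R_def by (auto intro: card_mono finite_subset)
  have B: "finite (B \<alpha>)" "card (B \<alpha>) \<le> q ^ nat r" if "\<alpha> \<in> R" for \<alpha>
    using card_classes_near_le[OF assms(5), of \<alpha> "nat r" N] that assms(6,11)
    unfolding B_def R_def by auto
  have "card (roots_mod v \<pi> N f) \<le> card (\<Union>\<alpha>\<in>R. B \<alpha>)"
    using roots_mod_subset_classes_near_roots[OF assms(2) f assms(8,9)] assms(10,11) R(1) B(1)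
    unfolding R_def B_def by (intro card_mono) auto
  also have "\<dots> \<le> (\<Sum>\<alpha>\<in>R. card (B \<alpha>))"
    using card_UN_le[OF R(1)] .
  also have "\<dots> \<le> q ^ nat r * card R"
    using sum_mono[of R "\<lambda>\<alpha>. card (B \<alpha>)" "\<lambda>_. q ^ nat r"] B(2) by (simp add: mult.commute)
  also have "\<dots> \<le> q ^ nat r * card {x. poly f x = 0}"
    using R(2) by simp
  finally show ?thesis .
qed

end
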